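(* In the setting described in the context, the mapping $\psi^b$ is a monotone $(1-\min\{2\beta,1/2\})$-CRS with regards to $h$.
   Context: Let $I=\{1,\dots,n\}$ be a set of items, $B$ a positive integer, $[B]=\{1,\dots,B\}$, $[0;B]=\{0,1,\dots,B\}$; for $u,w\in[0;B]^I$, $u\le w$ means coordinatewise. Let $f:[0;B]^I\to\mathbb{R}_{\ge0}$ be monotone and lattice submodular. Each item $i$ has a random state $\Phi(i)\in[B]$, independent across items, with known distribution $p_i(s)=\Pr[\Phi(i)=s]$. Item $i$ in state $s$ has a nonnegative integer cost $c_i(s)$, with $c_i(s)\ge c_i(s')$ whenever $s\ge s'$. $C$ is a positive integer budget and $\mathcal{I}^{out}\subseteq 2^I$ is a downward-closed family. For $S\subseteq I$ and a realization $\phi\in[B]^I$, $\phi_S\in[0;B]^I$ equals $\phi(i)$ for $i\in S$ and $0$ otherwise; $\overline{f}(S)=\mathbb{E}[f(\Phi_S)]$, and $F(\overline{x})=\sum_{U\subseteq I}\prod_{i\in U}\overline{x}(i)\prod_{i\notin U}(1-\overline{x}(i))\overline{f}(U)$. Let $P_{\mathcal{I}^{out}}=\mathrm{conv}\{\mathbf{1}_S: S\in\mathcal{I}^{out}\}$. A monotone $(\beta,\gamma)$-balanced CRS for $\mathcal{I}^{out}$ is a (possibly randomized) scheme that, for any $\overline{z}\in\beta\cdot P_{\mathcal{I}^{out}}$ and the random set $R$ containing each $i$ independently with probability $\overline{z}(i)$, maps $R$ to $\chi(R)\subseteq R$ with $\chi(R)\in\mathcal{I}^{out}$, such that $\Pr[i\in\chi(R)\mid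 i\in R]\ge\gamma$ for all $i$, and for $i\in R\subseteq R'$, $\Pr[i\in\chi(R)]\ge\Pr[i\in\chi(R')]$. Assume such a scheme exists for given $\beta,\gamma\in[0,1]$. Problem P1: variables $x(i,t)\ge0$ for $i\in I$, $t\in\{1,\dots,C-c_i(B)\}$, with $\overline{x}(i)=\sum_{t=1}^{C-c_i(B)}x(i,t)$; maximize $F(\overline{x})$ subject to $\overline{x}(i)\le1$, $\overline{x}\in P_{\mathcal{I}^{out}}$, and for all $t\in\{1,\dots,C\}$: $\sum_{i\in I}\mathbb{E}[\min\{c_i(\Phi(i)),t\}]\sum_{t'=1}^{t}x(i,t')\le 2t$. Let $y$ be the solution of P1 computed by the stochastic continuous greedy algorithm of Asadpour and Nazerzadeh (2016) with stopping time $l=\min\{\beta,1/4\}$ and step size $\delta=o(n^{-3})$, with $\overline{y}(i)=\sum_t y(i,t)$. Distribution $h$: the random vector $v\in[0;B]^I$ has independent coordinates with $\Pr[v(i)=j]=p_i(j)\overline{y}(i)$ for $j\in[B]$ and $\Pr[v(i)=0]=1-\overline{y}(i)$. Let $R(v)=\{i: v(i)\ne0\}$. Mapping $\psi^b$: for each $i\in R(v)$ independently sample a starting time $t(i)\in\{1,\dots,C-c_i(B)\}$ with $\Pr[t(i)=t]=y(i,t)/\overline{y}(i)$. Set $\psi^b(v)(i)=0$ for $i\notin R(v)$; for $i\in R(v)$ set $\psi^b(v)(i)=v(i)$ if $\sum_{i'\in R(v)\setminus\{i\},\ t(i')\le t(i)}c_{i'}(v(i'))\le t(i)$, and $\psi^b(v)(i)=0$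 otherwise. An $\alpha$-CRS with regards to $h$ is a (possibly randomized) mapping $\psi$ on $[0;B]^I$ with $\psi(v)(i)\in\{0,v(i)\}$ for all $i$, and $\Pr[\psi(v)(i)=j\mid v(i)=j]\ge\alpha$ for all $i\in I$, $j\in[B]$ (probability over $v\sim h$ and the randomness of $\psi$). It is monotone if for all $u,w$ with $u(i)=w(i)$ and $u\le w$, $\Pr[\psi(u)(i)=u(i)]\ge\Pr[\psi(w)(i)=w(i)]$ (probability over the randomness of $\psi$ only). *)

theory Defs
  imports "HOL-Probability.Probability"
begin

definition vec_dom :: "nat set \<Rightarrow> nat \<Rightarrow> (nat \<Rightarrow> nat) set" where
  "vec_dom I B = {v. \<forall>i. (i \<in> I \<longrightarrow> v i \<le> B) \<and> (i \<notin> I \<longrightarrow> v i = 0)}"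

text \<open>alpha-CRS with regards to h (randomised map = map to a pmf of outcomes).
  The conditional probability Pr[psi(v)(i)=j | v(i)=j] >= alpha is written multiplicatively.\<close>
definition alpha_CRS ::
  "nat set \<Rightarrow> nat \<Rightarrow> (nat \<Rightarrow> nat) pmf \<Rightarrow> ((nat \<Rightarrow> nat) \<Rightarrow> (nat \<Rightarrow> nat) pmf) \<Rightarrow> real \<Rightarrow> bool" where
  "alpha_CRS I B h \<psi> \<alpha> \<longleftrightarrow>
     (\<forall>v \<in> vec_dom I B. \<forall>w \<in> set_pmf (\<psi> v). \<forall>i. w i = 0 \<or> w i = v i) \<and>
     (\<forall>i \<in> I. \<forall>j \<in> {1..B}.
        measure_pmf.prob (bind_pmf h (\<lambda>v. map_pmf (\<lambda>w. (v, w)) (\<psi> v))) {(v, w). w i = j \<and> v i = j}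
          \<ge> \<alpha> * measure_pmf.prob h {v. v i = j})"

definition monotone_CRS ::
  "nat set \<Rightarrow> nat \<Rightarrow> ((nat \<Rightarrow> nat) \<Rightarrow> (nat \<Rightarrow> nat) pmf) \<Rightarrow> bool" where
  "monotone_CRS I B \<psi> \<longleftrightarrow>
     (\<forall>u \<in> vec_dom I B. \<forall>w \<in> vec_dom I B. \<forall>i \<in> I.
        u i = w i \<and> (\<forall>k. u k \<le> w k) \<longrightarrow>
        measure_pmf.prob (\<psi> u) {x. x i = u i} \<ge> measure_pmf.prob (\<psi> w) {x. x i = w i})"

definition ybar :: "(nat \<Rightarrow> nat \<Rightarrow> real) \<Rightarrow> nat \<Rightarrow> (nat \<Rightarrow> nat \<Rightarrow> nat) \<Rightarrow> nat \<Rightarrow> nat \<Rightarrow> real" where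
  "ybar y C c B i = (\<Sum>t = 1..C - c i B. y i t)"

text \<open>Distribution h: independent coordinates, v(i)=j w.p. p_i(j)*ybar(i), v(i)=0 w.p. 1-ybar(i).
  p i is the distribution of the state Phi(i).\<close>
definition h_dist ::
  "nat set \<Rightarrow> (nat \<Rightarrow> nat pmf) \<Rightarrow> (nat \<Rightarrow> nat \<Rightarrow> real) \<Rightarrow> nat \<Rightarrow> (nat \<Rightarrow> nat \<Rightarrow> nat) \<Rightarrow> nat
     \<Rightarrow> (nat \<Rightarrow> nat) pmf" where
  "h_dist I p y C c B = Pi_pmf I 0
     (\<lambda>i. bind_pmf (bernoulli_pmf (ybar y C c B i)) (\<lambda>b. if b then p i else return_pmf 0))"

definition R_set :: "nat set \<Rightarrow> (nat \<Rightarrow> nat) \<Rightarrow> nat set" where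
  "R_set I v = {i \<in> I. v i \<noteq> 0}"

text \<open>Starting time distribution: Pr[t(i)=t] = y(i,t)/ybar(i) on {1..C - c_i(B)}.
  (When ybar(i)=0 the paper leaves it undefined; we use an arbitrary default.)\<close>
definition start_pmf :: "(nat \<Rightarrow> nat \<Rightarrow> real) \<Rightarrow> nat \<Rightarrow> (nat \<Rightarrow> nat \<Rightarrow> nat) \<Rightarrow> nat \<Rightarrow> nat \<Rightarrow> nat pmf" where
  "start_pmf y C c B i =
     (if ybar y C c B i > 0
      then embed_pmf (\<lambda>t. if t \<in> {1..C - c i B} then y i t / ybar y C c B i else 0)
      else return_pmf 1)"

definition psi_out :: "nat set \<Rightarrow> (nat \<Rightarrow> nat \<Rightarrow> nat) \<Rightarrow> (nat \<Rightarrow> nat) \<Rightarrow> (nat \<Rightarrow> nat) \<Rightarrow> nat \<Rightarrow> nat" where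
  "psi_out I c v st i =
     (if i \<in> R_set I v \<and>
         (\<Sum>i' \<in> {i' \<in> R_set I v - {i}. st i' \<le> st i}. c i' (v i')) \<le> st i
      then v i else 0)"

definition psi_b ::
  "nat set \<Rightarrow> (nat \<Rightarrow> nat \<Rightarrow> real) \<Rightarrow> nat \<Rightarrow> (nat \<Rightarrow> nat \<Rightarrow> nat) \<Rightarrow> nat \<Rightarrow> (nat \<Rightarrow> nat) \<Rightarrow> (nat \<Rightarrow> nat) pmf" where
  "psi_b I y C c B v = map_pmf (\<lambda>st. psi_out I c v st) (Pi_pmf (R_set I v) 0 (start_pmf y C c B))"

end

theory Submission
  imports Defs
begin

(* Monotonicity: with the starting times fixed, lowering the other coordinates of v only removes
   items and lowers costs among those started no later than t(i), so item i survives under u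
   whenever it survives under w.

   Balance: condition on v(i) = j and t(i) = t, where t lies in [1, C]. If i is dropped, the other
   items started by time t cost more than t in total, so their costs truncated at t still sum to
   at least t. By independence the expected truncated load is
   sum_k E[min(c_k(Phi(k)), t)] * sum_{t' <= t} y(k, t') <= 2 l t (the knapsack constraint of P1),
   and Markov's inequality bounds the probability of dropping i by 2 l = min(2 beta, 1/2). *)

lemma less_sum_imp_le_sum_min:
  fixes f :: "'a \<Rightarrow> nat"
  assumes "finite A" and "t < (\<Sum>a\<in>A. f a)"
  shows "t \<le> (\<Sum>a\<in>A. min (f a) t)"
proof (cases "\<exists>a\<in>A. t < f a")
  case True
  then obtain a where "a \<in> A" "t < f a" by blast
  then have "min (f a) t \<le> (\<Sum>a\<in>A. min (f a) t)"
    using assms(1) by (intro member_le_sum) auto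
  with \<open>t < f a\<close> show ?thesis by simp
next
  case False
  then have "(\<Sum>a\<in>A. min (f a) t) = (\<Sum>a\<in>A. f a)"
    by (intro sum.cong) auto
  with assms(2) show ?thesis by simp
qed

lemma bind_pmf_Pair_map_pmf:
  "bind_pmf M (\<lambda>x. map_pmf (\<lambda>w. (x, w)) (map_pmf (F x) N)) = map_pmf (\<lambda>(x, z). (x, F x z)) (pair_pmf M N)"
  by (simp add: pair_pmf_def map_bind_pmf bind_map_pmf map_pmf_def bind_assoc_pmf bind_return_pmf)

lemma pair_Pi_pmf_insert:
  assumes "finite A" and "i \<notin> A"
  shows "pair_pmf (Pi_pmf (insert i A) d p) (Pi_pmf (insert i A) d q) =
    bind_pmf (pair_pmf (p i) (q i)) (\<lambda>(a, b).
      map_pmf (\<lambda>(f, g). (f(i := a), g(i := b))) (pair_pmf (Pi_pmf A d p) (Pi_pmf A d q)))"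
  using assms
  by (simp add: Pi_pmf_insert' pair_pmf_def map_pmf_def bind_assoc_pmf bind_return_pmf
      bind_commute_pmf[of "Pi_pmf A d p" "q i"])

lemma nn_integral_Pi_pmf_component:
  assumes "finite A" and "k \<in> A"
  shows "(\<integral>\<^sup>+f. F (f k) \<partial>Pi_pmf A d p) = (\<integral>\<^sup>+x. F x \<partial>p k)"
proof -
  have "(\<integral>\<^sup>+f. F (f k) \<partial>Pi_pmf A d p) = (\<integral>\<^sup>+x. F x \<partial>map_pmf (\<lambda>f. f k) (Pi_pmf A d p))"
    by simp
  also have "map_pmf (\<lambda>f. f k) (Pi_pmf A d p) = p k"
    using assms by (simp add: Pi_pmf_component)
  finally show ?thesis .
qed

lemma nn_integral_pair_pmf_mult:
  "(\<integral>\<^sup>+z. F (fst z) * G (snd z) \<partial>pair_pmf M N) = (\<integral>\<^sup>+x. F x \<partial>M) * (\<integral>\<^sup>+y. G y \<partial>N)"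
  by (simp add: nn_integral_pair_pmf' nn_integral_cmult nn_integral_multc)

lemma nn_integral_bernoulli_mixture:
  assumes "0 \<le> r" and "r \<le> 1" and "F d = 0"
  shows "(\<integral>\<^sup>+x. F x \<partial>bind_pmf (bernoulli_pmf r) (\<lambda>b. if b then M else return_pmf d))
    = ennreal r * (\<integral>\<^sup>+x. F x \<partial>M)"
proof -
  have "(\<integral>\<^sup>+x. F x \<partial>(if b then M else return_pmf d)) = (if b then \<integral>\<^sup>+x. F x \<partial>M else 0)" for b
    using assms(3) by simp
  then show ?thesis
    using assms(1,2) by (simp add: mult.commute)
qed

lemma psi_out_cong:
  assumes "\<And>k. k \<in> R_set I v \<Longrightarrow> st k = st' k"
  shows "psi_out I c v st = psi_out I c v st'"
proof
  fix i
  have "{k \<in> R_set I v - {i}. st k \<le> st i} = {k \<in> R_set I v - {i}. st' k \<le> st' i}"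
    if "i \<in> R_set I v" using that assms by auto
  then show "psi_out I c v st i = psi_out I c v st' i"
    using assms by (auto simp: psi_out_def)
qed

(* Drawing starting times for all of I, not only for R(v), puts psi_b v on one probability space
   for every v: this couples psi_b u with psi_b w and makes the joint law with h a product. *)
lemma psi_b_eq_map_Pi_pmf:
  assumes "finite I"
  shows "psi_b I y C c B v = map_pmf (psi_out I c v) (Pi_pmf I 0 (start_pmf y C c B))"
proof -
  have "R_set I v \<subseteq> I" by (auto simp: R_set_def)
  then have "psi_b I y C c B v = map_pmf (\<lambda>st. psi_out I c v (\<lambda>k. if k \<in> R_set I v then st k else 0))
      (Pi_pmf I 0 (start_pmf y C c B))"
    unfolding psi_b_def using assms by (simp add: Pi_pmf_subset[of I "R_set I v"] pmf.map_comp o_def)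
  also have "\<dots> = map_pmf (psi_out I c v) (Pi_pmf I 0 (start_pmf y C c B))"
    by (intro map_pmf_cong refl psi_out_cong) simp
  finally show ?thesis .
qed

lemma psi_out_selected_antimono:
  assumes "finite I" and cost_mono: "\<And>i s s'. i \<in> I \<Longrightarrow> s' \<le> s \<Longrightarrow> c i s' \<le> c i s"
    and le: "\<And>k. u k \<le> w k" and "u i = w i" and selected: "psi_out I c w st i = w i"
  shows "psi_out I c u st i = u i"
proof (cases "u i = 0")
  case True
  then show ?thesis by (simp add: psi_out_def)
next
  case False
  have R_mono: "R_set I u \<subseteq> R_set I w"
    using le by (auto simp: R_set_def intro: less_le_trans)
  have "i \<in> R_set I w" and fits: "(\<Sum>k \<in> {k \<in> R_set I w - {i}. st k \<le> st i}. c k (w k)) \<le> st i"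
    using selected False \<open>u i = w i\<close> by (auto simp: psi_out_def split: if_splits)
  have "(\<Sum>k \<in> {k \<in> R_set I u - {i}. st k \<le> st i}. c k (u k))
      \<le> (\<Sum>k \<in> {k \<in> R_set I u - {i}. st k \<le> st i}. c k (w k))"
    using le cost_mono by (intro sum_mono) (auto simp: R_set_def)
  also have "\<dots> \<le> (\<Sum>k \<in> {k \<in> R_set I w - {i}. st k \<le> st i}. c k (w k))"
    using R_mono \<open>finite I\<close> by (intro sum_mono2) (auto simp: R_set_def)
  finally show ?thesis
    using fits \<open>i \<in> R_set I w\<close> \<open>u i = w i\<close> False by (auto simp: psi_out_def R_set_def)
qed

lemma monotone_CRS_psi_b:
  assumes "finite I" and "\<And>i s s'. i \<in> I \<Longrightarrow> s' \<le> s \<Longrightarrow> c i s' \<le> c i s"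
  shows "monotone_CRS I B (psi_b I y C c B)"
  unfolding monotone_CRS_def
proof (intro ballI impI)
  fix u w :: "nat \<Rightarrow> nat" and i assume uw: "u i = w i \<and> (\<forall>k. u k \<le> w k)"
  let ?S = "Pi_pmf I 0 (start_pmf y C c B)"
  have "psi_out I c w -` {x. x i = w i} \<subseteq> psi_out I c u -` {x. x i = u i}"
    using psi_out_selected_antimono[of I c u w i] assms uw by auto
  then have "measure_pmf.prob ?S (psi_out I c w -` {x. x i = w i})
      \<le> measure_pmf.prob ?S (psi_out I c u -` {x. x i = u i})"
    by (rule measure_pmf.finite_measure_mono) simp
  then show "measure_pmf.prob (psi_b I y C c B w) {x. x i = w i}
      \<le> measure_pmf.prob (psi_b I y C c B u) {x. x i = u i}"
    using assms(1) by (simp add: psi_b_eq_map_Pi_pmf)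
qed

lemma ybar_nonneg: "(\<And>t. 0 \<le> y k t) \<Longrightarrow> 0 \<le> ybar y C c B k"
  unfolding ybar_def by (rule sum_nonneg)

lemma pmf_start_pmf:
  assumes "\<And>t. 0 \<le> y k t" and "0 < ybar y C c B k"
  shows "pmf (start_pmf y C c B k) t = (if t \<in> {1..C - c k B} then y k t / ybar y C c B k else 0)"
proof -
  let ?F = "\<lambda>t. if t \<in> {1..C - c k B} then y k t / ybar y C c B k else 0"
  have "(\<integral>\<^sup>+t. ennreal (?F t) \<partial>count_space UNIV) = (\<Sum>t\<in>{1..C - c k B}. ennreal (?F t))"
    by (intro nn_integral_count_space') auto
  also have "\<dots> = ennreal ((\<Sum>t = 1..C - c k B. y k t) / ybar y C c B k)"
    using assms by (simp add: sum_divide_distrib)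
  also have "\<dots> = 1"
    using assms(2) by (simp add: ybar_def)
  moreover have "0 \<le> ?F t" for t
    using assms by simp
  ultimately show ?thesis
    using assms(2) unfolding start_pmf_def by (simp add: pmf_embed_pmf)
qed

lemma set_pmf_start_pmf:
  assumes "\<And>t. 0 \<le> y k t" and "1 \<le> C"
  shows "set_pmf (start_pmf y C c B k) \<subseteq> {1..C}"
proof (cases "0 < ybar y C c B k")
  case True
  then show ?thesis
    using assms(1) by (auto simp: set_pmf_eq pmf_start_pmf split: if_splits)
next
  case False
  then show ?thesis
    using assms(2) by (simp add: start_pmf_def)
qed

lemma prob_start_pmf_atMost:
  assumes nonneg: "\<And>t. 0 \<le> y k t" and supp: "\<And>t. t \<notin> {1..C - c k B} \<Longrightarrow> y k t = 0"
  shows "measure_pmf.prob (start_pmf y C c B k) {..t} * ybar y C c B k = (\<Sum>t' = 1..t. y k t')"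
proof (cases "0 < ybar y C c B k")
  case True
  have "{..t} = insert 0 {1..t}" by auto
  then have "(\<Sum>s\<le>t. y k s) = (\<Sum>s = 1..t. y k s)"
    using supp[of 0] by simp
  moreover have "measure_pmf.prob (start_pmf y C c B k) {..t} = (\<Sum>s\<le>t. y k s) / ybar y C c B k"
    using True nonneg supp
    by (auto simp: measure_measure_pmf_finite pmf_start_pmf sum_divide_distrib intro: sum.cong)
  ultimately show ?thesis
    using True by simp
next
  case False
  then have ybar_0: "ybar y C c B k = 0"
    using ybar_nonneg[of y k] nonneg by (simp add: order_less_le)
  then have "y k t = 0" for t
    using nonneg supp[of t] by (cases "t \<in> {1..C - c k B}") (auto simp: ybar_def sum_nonneg_eq_0_iff)
  with ybar_0 show ?thesis
    by simp
qed

definition truncated_load :: "nat set \<Rightarrow> (nat \<Rightarrow> nat \<Rightarrow> nat) \<Rightarrow> (nat \<Rightarrow> nat) \<Rightarrow> (nat \<Rightarrow> nat) \<Rightarrow> nat \<Rightarrow> real"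
  where "truncated_load A c v st t = (\<Sum>k\<in>A. if v k \<noteq> 0 \<and> st k \<le> t then real (min (c k (v k)) t) else 0)"

lemma truncated_load_fun_upd:
  "i \<notin> A \<Longrightarrow> truncated_load A c (v(i := a)) (st(i := b)) t = truncated_load A c v st t"
  unfolding truncated_load_def by (intro sum.cong) auto

lemma psi_out_dropped_imp_truncated_load:
  assumes "finite I" and "i \<in> I" and "v i \<noteq> 0" and "psi_out I c v st i \<noteq> v i"
  shows "real (st i) \<le> truncated_load (I - {i}) c v st (st i)"
proof -
  define E where "E = {k \<in> I - {i}. v k \<noteq> 0 \<and> st k \<le> st i}"
  have "finite E"
    using assms(1) by (simp add: E_def)
  have "{k \<in> R_set I v - {i}. st k \<le> st i} = E"
    by (auto simp: E_def R_set_def)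
  then have "st i < (\<Sum>k\<in>E. c k (v k))"
    using assms(2-4) by (auto simp: psi_out_def R_set_def)
  then have "st i \<le> (\<Sum>k\<in>E. min (c k (v k)) (st i))"
    using \<open>finite E\<close> by (rule less_sum_imp_le_sum_min[rotated])
  also have "real (\<Sum>k\<in>E. min (c k (v k)) (st i)) = truncated_load (I - {i}) c v st (st i)"
    using assms(1) unfolding truncated_load_def E_def of_nat_sum
    by (subst sum.inter_filter) (auto intro: sum.cong)
  finally show ?thesis
    by simp
qed

definition h_coord ::
  "(nat \<Rightarrow> nat pmf) \<Rightarrow> (nat \<Rightarrow> nat \<Rightarrow> real) \<Rightarrow> nat \<Rightarrow> (nat \<Rightarrow> nat \<Rightarrow> nat) \<Rightarrow> nat \<Rightarrow> nat \<Rightarrow> nat pmf"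
  where "h_coord p y C c B k = bind_pmf (bernoulli_pmf (ybar y C c B k)) (\<lambda>b. if b then p k else return_pmf 0)"

lemma h_dist_eq_Pi_pmf: "h_dist I p y C c B = Pi_pmf I 0 (h_coord p y C c B)"
  unfolding h_dist_def h_coord_def ..

lemma prob_h_dist_component:
  assumes "finite I" and "i \<in> I"
  shows "measure_pmf.prob (h_dist I p y C c B) {v. v i = j} = pmf (h_coord p y C c B i) j"
proof -
  have "measure_pmf.prob (h_dist I p y C c B) {v. v i = j}
      = measure_pmf.prob (map_pmf (\<lambda>v. v i) (Pi_pmf I 0 (h_coord p y C c B))) {j}"
    by (simp add: h_dist_eq_Pi_pmf vimage_def)
  then show ?thesis
    using assms by (simp add: Pi_pmf_component measure_pmf_single)
qed

locale start_time_crs =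
  fixes I :: "nat set" and B C :: nat and p :: "nat \<Rightarrow> nat pmf" and c :: "nat \<Rightarrow> nat \<Rightarrow> nat"
    and y :: "nat \<Rightarrow> nat \<Rightarrow> real" and l :: real
  assumes finite_I: "finite I" and C_pos: "1 \<le> C"
    and states_pos: "\<And>i. i \<in> I \<Longrightarrow> 0 \<notin> set_pmf (p i)"
    and y_nonneg: "\<And>i t. 0 \<le> y i t"
    and y_supp: "\<And>i t. i \<in> I \<Longrightarrow> t \<notin> {1..C - c i B} \<Longrightarrow> y i t = 0"
    and ybar_le_1: "\<And>i. i \<in> I \<Longrightarrow> ybar y C c B i \<le> 1"
    and y_knap: "\<And>t. t \<in> {1..C} \<Longrightarrow>
      (\<Sum>i\<in>I. measure_pmf.expectation (p i) (\<lambda>s. real (min (c i s) t)) * (\<Sum>t' = 1..t. y i t'))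
        \<le> l * (2 * real t)"
begin

abbreviation "coord \<equiv> h_coord p y C c B"
abbreviation "start \<equiv> start_pmf y C c B"
abbreviation "trunc_cost i t \<equiv> measure_pmf.expectation (p i) (\<lambda>s. real (min (c i s) t))"

lemma l_nonneg: "0 \<le> l"
proof -
  have "0 \<le> (\<Sum>i\<in>I. trunc_cost i 1 * (\<Sum>t' = 1..1. y i t'))"
    by (intro sum_nonneg mult_nonneg_nonneg Bochner_Integration.integral_nonneg y_nonneg) simp_all
  also have "\<dots> \<le> l * 2"
    using y_knap[of 1] C_pos by simp
  finally show ?thesis
    by simp
qed

lemma nn_integral_coord_truncated_cost:
  assumes "k \<in> I"
  shows "(\<integral>\<^sup>+x. ennreal (if x \<noteq> 0 then real (min (c k x) t) else 0) \<partial>coord k)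
    = ennreal (ybar y C c B k * trunc_cost k t)"
proof -
  have "(\<integral>\<^sup>+x. ennreal (if x \<noteq> 0 then real (min (c k x) t) else 0) \<partial>p k)
      = (\<integral>\<^sup>+x. ennreal (real (min (c k x) t)) \<partial>p k)"
    using states_pos[OF assms] by (intro nn_integral_cong_AE) (auto simp: AE_measure_pmf_iff)
  also have "\<dots> = ennreal (trunc_cost k t)"
    by (intro nn_integral_eq_integral measure_pmf.integrable_const_bound[where B = t]) auto
  finally show ?thesis
    using ybar_nonneg[of y k] y_nonneg ybar_le_1[OF assms] unfolding h_coord_def
    by (simp add: nn_integral_bernoulli_mixture ennreal_mult mult.commute)
qed

lemma nn_integral_truncated_load:
  assumes "A \<subseteq> I"
  shows "(\<integral>\<^sup>+z. ennreal (truncated_load A c (fst z) (snd z) t) \<partial>pair_pmf (Pi_pmf A 0 coord) (Pi_pmf A 0 start))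
    = ennreal (\<Sum>k\<in>A. trunc_cost k t * (\<Sum>t' = 1..t. y k t'))"
proof -
  have "finite A"
    using assms finite_I by (rule finite_subset)
  define U where "U k x = ennreal (if x \<noteq> 0 then real (min (c k x) t) else 0)" for k x
  have load: "ennreal (truncated_load A c f g t) = (\<Sum>k\<in>A. U k (f k) * indicator {..t} (g k))" for f g
    unfolding truncated_load_def U_def
    by (subst sum_ennreal[symmetric]) (auto simp del: sum_ennreal simp: indicator_def intro!: sum.cong)
  have "(\<integral>\<^sup>+z. U k (fst z k) * indicator {..t} (snd z k) \<partial>pair_pmf (Pi_pmf A 0 coord) (Pi_pmf A 0 start))
      = ennreal (trunc_cost k t * (\<Sum>t' = 1..t. y k t'))" if "k \<in> A" for k
  proof -
    have "k \<in> I"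
      using that assms by blast
    have "(\<integral>\<^sup>+z. U k (fst z k) * indicator {..t} (snd z k) \<partial>pair_pmf (Pi_pmf A 0 coord) (Pi_pmf A 0 start))
        = (\<integral>\<^sup>+x. U k x \<partial>coord k) * emeasure (start k) {..t}"
      using \<open>finite A\<close> that
      by (simp add: nn_integral_pair_pmf_mult[where F = "\<lambda>f. U k (f k)" and G = "\<lambda>g. indicator {..t} (g k)"]
          nn_integral_Pi_pmf_component)
    also have "\<dots> = ennreal (ybar y C c B k * trunc_cost k t) * ennreal (measure_pmf.prob (start k) {..t})"
      unfolding U_def nn_integral_coord_truncated_cost[OF \<open>k \<in> I\<close>] measure_pmf.emeasure_eq_measure ..
    also have "\<dots> = ennreal (trunc_cost k t * (measure_pmf.prob (start k) {..t} * ybar y C c B k))"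
      using y_nonneg by (simp add: ybar_nonneg mult_ac flip: ennreal_mult)
    also have "\<dots> = ennreal (trunc_cost k t * (\<Sum>t' = 1..t. y k t'))"
      using prob_start_pmf_atMost[of y k C c B t] y_nonneg y_supp[OF \<open>k \<in> I\<close>] by simp
    finally show ?thesis .
  qed
  then show ?thesis
    using y_nonneg
    by (simp add: load nn_integral_sum sum_nonneg)
qed

lemma emeasure_truncated_load_ge_le:
  assumes "A \<subseteq> I" and t: "t \<in> {1..C}"
  shows "emeasure (pair_pmf (Pi_pmf A 0 coord) (Pi_pmf A 0 start))
      {z. real t \<le> truncated_load A c (fst z) (snd z) t} \<le> ennreal (2 * l)"
proof -
  let ?P = "pair_pmf (Pi_pmf A 0 coord) (Pi_pmf A 0 start)"
  let ?X = "\<lambda>z. ennreal (truncated_load A c (fst z) (snd z) t)"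
  have markov_form: "real t \<le> L \<longleftrightarrow> 1 \<le> ennreal (1 / real t) * ennreal L" if "0 \<le> L" for L
  proof -
    have "ennreal (1 / real t) * ennreal L = ennreal (L / real t)"
      using that by (simp flip: ennreal_mult)
    then show ?thesis
      using t that by (simp flip: ennreal_1 add: le_divide_eq)
  qed
  have "{z. real t \<le> truncated_load A c (fst z) (snd z) t} = {z \<in> UNIV. 1 \<le> ennreal (1 / real t) * ?X z}"
    by (auto simp: markov_form truncated_load_def sum_nonneg)
  then have "emeasure ?P {z. real t \<le> truncated_load A c (fst z) (snd z) t}
      \<le> ennreal (1 / real t) * (\<integral>\<^sup>+z. ?X z * indicator UNIV z \<partial>?P)"
    by (simp only:) (rule nn_integral_Markov_inequality, simp_all)
  also have "\<dots> \<le> ennreal (1 / real t) * ennreal (l * (2 * real t))"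
  proof (rule mult_left_mono)
    have "(\<Sum>k\<in>A. trunc_cost k t * (\<Sum>t' = 1..t. y k t')) \<le> (\<Sum>k\<in>I. trunc_cost k t * (\<Sum>t' = 1..t. y k t'))"
      using assms(1) finite_I y_nonneg by (intro sum_mono2) (auto intro!: mult_nonneg_nonneg sum_nonneg)
    also have "\<dots> \<le> l * (2 * real t)"
      using y_knap[OF t] .
    finally show "(\<integral>\<^sup>+z. ?X z * indicator UNIV z \<partial>?P) \<le> ennreal (l * (2 * real t))"
      using nn_integral_truncated_load[OF assms(1)] by (simp add: ennreal_leI)
  qed simp
  also have "\<dots> = ennreal (2 * l)"
    using t by (simp flip: ennreal_mult') (simp only: mult.commute)
  finally show ?thesis .
qed

lemma emeasure_dropped_le:
  assumes "i \<in> I" and "j \<noteq> 0"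
  shows "emeasure (pair_pmf (Pi_pmf I 0 coord) (Pi_pmf I 0 start)) {(v, st). v i = j \<and> psi_out I c v st i \<noteq> j}
    \<le> ennreal (2 * l) * pmf (coord i) j"
proof -
  define I' where "I' = I - {i}"
  have "finite I'" and "i \<notin> I'" and "I' \<subseteq> I"
    using finite_I by (auto simp: I'_def)
  let ?D = "{(v, st). v i = j \<and> psi_out I c v st i \<noteq> j}"
  let ?P' = "pair_pmf (Pi_pmf I' 0 coord) (Pi_pmf I' 0 start)"
  let ?upd = "\<lambda>a b (f, g). (f(i := a), g(i := b))"
  have split_i: "pair_pmf (Pi_pmf I 0 coord) (Pi_pmf I 0 start)
      = bind_pmf (pair_pmf (coord i) (start i)) (\<lambda>(a, b). map_pmf (?upd a b) ?P')"
    using pair_Pi_pmf_insert[OF \<open>finite I'\<close> \<open>i \<notin> I'\<close>] assms(1) by (simp add: I'_def insert_absorb)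
  have dropped_given_i: "emeasure ?P' (?upd a b -` ?D) \<le> ennreal (2 * l) * indicator {j} a"
    if "b \<in> {1..C}" for a b
  proof (cases "a = j")
    case True
    have "real b \<le> truncated_load I' c f g b" if "psi_out I c (f(i := j)) (g(i := b)) i \<noteq> j" for f g
      using psi_out_dropped_imp_truncated_load[of I i "f(i := j)" c "g(i := b)"] that assms finite_I
        truncated_load_fun_upd[OF \<open>i \<notin> I'\<close>]
      by (simp add: I'_def)
    then have "?upd a b -` ?D \<subseteq> {z. real b \<le> truncated_load I' c (fst z) (snd z) b}"
      using True by auto
    then have "emeasure ?P' (?upd a b -` ?D) \<le> emeasure ?P' {z. real b \<le> truncated_load I' c (fst z) (snd z) b}"
      by (rule emeasure_mono) simp
    also have "\<dots> \<le> ennreal (2 * l)"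
      using \<open>I' \<subseteq> I\<close> that by (rule emeasure_truncated_load_ge_le)
    finally show ?thesis
      using True by simp
  next
    case False
    then have "?upd a b -` ?D = {}"
      by auto
    then show ?thesis
      by (simp only: emeasure_empty zero_le)
  qed
  have "emeasure (pair_pmf (Pi_pmf I 0 coord) (Pi_pmf I 0 start)) ?D
      = (\<integral>\<^sup>+z. emeasure ?P' (?upd (fst z) (snd z) -` ?D) \<partial>pair_pmf (coord i) (start i))"
    unfolding split_i by (simp add: case_prod_unfold)
  also have "\<dots> \<le> (\<integral>\<^sup>+z. ennreal (2 * l) * indicator {j} (fst z) \<partial>pair_pmf (coord i) (start i))"
    using set_pmf_start_pmf[of y i C c B] y_nonneg C_pos dropped_given_i
    by (intro nn_integral_mono_AE) (auto simp: AE_measure_pmf_iff)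
  also have "\<dots> = ennreal (2 * l) * pmf (coord i) j"
    by (simp add: nn_integral_pair_pmf' nn_integral_cmult emeasure_pmf_single)
  finally show ?thesis .
qed

lemma alpha_CRS_psi_b: "alpha_CRS I B (h_dist I p y C c B) (psi_b I y C c B) (1 - 2 * l)"
  unfolding alpha_CRS_def
proof (intro conjI ballI allI)
  fix v w i
  assume "w \<in> set_pmf (psi_b I y C c B v)"
  then show "w i = 0 \<or> w i = v i"
    using finite_I by (auto simp: psi_b_eq_map_Pi_pmf psi_out_def)
next
  fix i j
  assume "i \<in> I" and "j \<in> {1..B}"
  let ?P = "pair_pmf (Pi_pmf I 0 coord) (Pi_pmf I 0 start)"
  let ?kept = "{(v, st). v i = j \<and> psi_out I c v st i = j}"
  let ?dropped = "{(v, st). v i = j \<and> psi_out I c v st i \<noteq> j}"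
  have "bind_pmf (h_dist I p y C c B) (\<lambda>v. map_pmf (\<lambda>w. (v, w)) (psi_b I y C c B v))
      = map_pmf (\<lambda>(v, st). (v, psi_out I c v st)) ?P"
    using finite_I by (simp add: h_dist_eq_Pi_pmf psi_b_eq_map_Pi_pmf bind_pmf_Pair_map_pmf)
  moreover have "(\<lambda>(v, st). (v, psi_out I c v st)) -` {(v, w). w i = j \<and> v i = j} = ?kept"
    by auto
  ultimately have kept: "measure_pmf.prob (bind_pmf (h_dist I p y C c B) (\<lambda>v. map_pmf (\<lambda>w. (v, w)) (psi_b I y C c B v)))
      {(v, w). w i = j \<and> v i = j} = measure_pmf.prob ?P ?kept"
    by simp
  have total: "measure_pmf.prob (h_dist I p y C c B) {v. v i = j} = pmf (coord i) j"
    using finite_I \<open>i \<in> I\<close> by (rule prob_h_dist_component)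
  have "pmf (coord i) j = measure_pmf.prob (map_pmf fst ?P) {v. v i = j}"
    using total by (simp add: map_fst_pair_pmf h_dist_eq_Pi_pmf)
  also have "\<dots> = measure_pmf.prob ?P (?kept \<union> ?dropped)"
    by (auto intro: arg_cong[where f = "measure_pmf.prob ?P"])
  also have "\<dots> = measure_pmf.prob ?P ?kept + measure_pmf.prob ?P ?dropped"
    by (rule measure_pmf.finite_measure_Union) auto
  finally have split: "pmf (coord i) j = measure_pmf.prob ?P ?kept + measure_pmf.prob ?P ?dropped" .
  have "ennreal (measure_pmf.prob ?P ?dropped) \<le> ennreal (2 * l * pmf (coord i) j)"
    using emeasure_dropped_le[OF \<open>i \<in> I\<close>] \<open>j \<in> {1..B}\<close> l_nonneg
    by (simp add: measure_pmf.emeasure_eq_measure ennreal_mult)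
  then have "measure_pmf.prob ?P ?dropped \<le> 2 * l * pmf (coord i) j"
    using l_nonneg by simp
  then show "(1 - 2 * l) * measure_pmf.prob (h_dist I p y C c B) {v. v i = j}
      \<le> measure_pmf.prob (bind_pmf (h_dist I p y C c B) (\<lambda>v. map_pmf (\<lambda>w. (v, w)) (psi_b I y C c B v)))
          {(v, w). w i = j \<and> v i = j}"
    unfolding kept total using split by (simp add: algebra_simps)
qed

end

theorem lemma4:
  fixes n B C :: nat and p :: "nat \<Rightarrow> nat pmf" and c :: "nat \<Rightarrow> nat \<Rightarrow> nat"
    and Iout :: "nat set set" and \<beta> :: real and y :: "nat \<Rightarrow> nat \<Rightarrow> real"
  defines "I \<equiv> {1..n}" and "l \<equiv> min \<beta> (1/4)"
  assumes B_pos: "B \<ge> 1" and C_pos: "C \<ge> 1"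
    and states: "\<And>i. i \<in> I \<Longrightarrow> set_pmf (p i) \<subseteq> {1..B}"
    and cost_mono: "\<And>i s s'. i \<in> I \<Longrightarrow> s' \<le> s \<Longrightarrow> c i s' \<le> c i s"
    and Iout_sub: "Iout \<subseteq> Pow I" and Iout_down: "\<And>S T. S \<in> Iout \<Longrightarrow> T \<subseteq> S \<Longrightarrow> T \<in> Iout"
    and beta: "0 \<le> \<beta>" "\<beta> \<le> 1"
    and y_nonneg: "\<And>i t. 0 \<le> y i t"
    and y_supp: "\<And>i t. i \<notin> I \<or> t \<notin> {1..C - c i B} \<Longrightarrow> y i t = 0"
    and y_box: "\<And>i. i \<in> I \<Longrightarrow> ybar y C c B i \<le> l"
    and y_poly: "\<exists>lam :: nat set \<Rightarrow> real. (\<forall>S \<in> Iout. 0 \<le> lam S) \<and> (\<Sum>S \<in> Iout. lam S) = l \<and>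
                   (\<forall>i \<in> I. ybar y C c B i = (\<Sum>S \<in> {S \<in> Iout. i \<in> S}. lam S))"
    and y_knap: "\<And>t. t \<in> {1..C} \<Longrightarrow>
        (\<Sum>i \<in> I. measure_pmf.expectation (p i) (\<lambda>s. real (min (c i s) t)) * (\<Sum>t' = 1..t. y i t'))
          \<le> l * (2 * real t)"
  shows "alpha_CRS I B (h_dist I p y C c B) (psi_b I y C c B) (1 - min (2 * \<beta>) (1/2))
       \<and> monotone_CRS I B (psi_b I y C c B)"
proof -
  have "finite I"
    by (simp add: I_def)
  have "l \<le> 1/4"
    by (simp add: l_def)
  interpret start_time_crs I B C p c y l
  proof
    show "0 \<notin> set_pmf (p i)" if "i \<in> I" for i
      using states[OF that] by auto
    show "ybar y C c B i \<le> 1" if "i \<in> I" for i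
      using y_box[OF that] \<open>l \<le> 1/4\<close> by simp
  qed (use \<open>finite I\<close> C_pos y_nonneg y_supp y_knap in auto)
  have "1 - min (2 * \<beta>) (1/2) = 1 - 2 * l"
    by (auto simp: l_def min_def)
  then show ?thesis
    using alpha_CRS_psi_b monotone_CRS_psi_b[OF \<open>finite I\<close> cost_mono] by simp
qed

end
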